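(* If $r \geq 3$ and $t \geq r-1$ are integers, then for all $n$, \[ \mathrm{ex}_r ( n , \textup{Berge-}K_{2,t} ) \leq \left( \frac{ r - 1}{t} \binom{t}{r - 1} + 2t + 1 \right) \mathrm{ex}(n , K_{2,t}). \]
   Context: A hypergraph $H$ is a Berge-$F$ (for a graph $F$) if there is a bijection $f : E(F) \to E(H)$ with $e \subseteq f(e)$ for every $e \in E(F)$. $\mathrm{ex}_r(n,\textup{Berge-}F)$ is the maximum number of edges in an $n$-vertex $r$-uniform hypergraph containing no subhypergraph that is a Berge-$F$. $\mathrm{ex}(n,K_{2,t})$ is the usual Turán number: the maximum number of edges in an $n$-vertex graph with no subgraph isomorphic to $K_{2,t}$. *)

theory Defs
  imports Complex_Main
begin

text \<open>Vertex set of an n-vertex (hyper)graph: {0..<n}. A simple graph is a set of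
  2-element subsets; an r-uniform hypergraph is a set of r-element subsets.\<close>

definition uniform_hypergraph :: "nat \<Rightarrow> nat \<Rightarrow> nat set set \<Rightarrow> bool" where
  "uniform_hypergraph r n H \<longleftrightarrow> (\<forall>e\<in>H. e \<subseteq> {0..<n} \<and> card e = r)"

definition K2t_edges :: "nat \<Rightarrow> nat \<Rightarrow> nat set \<Rightarrow> nat set set" where
  "K2t_edges a b B = {{x, y} | x y. x \<in> {a, b} \<and> y \<in> B}"

definition is_K2t_copy :: "nat \<Rightarrow> nat \<Rightarrow> nat \<Rightarrow> nat set \<Rightarrow> bool" where
  "is_K2t_copy t a b B \<longleftrightarrow> a \<noteq> b \<and> finite B \<and> card B = t \<and> a \<notin> B \<and> b \<notin> B"

definition has_Berge_K2t :: "nat \<Rightarrow> nat set set \<Rightarrow> bool" where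
  "has_Berge_K2t t H \<longleftrightarrow> (\<exists>a b B f. is_K2t_copy t a b B \<and>
      inj_on f (K2t_edges a b B) \<and> f ` K2t_edges a b B \<subseteq> H \<and>
      (\<forall>e\<in>K2t_edges a b B. e \<subseteq> f e))"

definition has_K2t :: "nat \<Rightarrow> nat set set \<Rightarrow> bool" where
  "has_K2t t G \<longleftrightarrow> (\<exists>a b B. is_K2t_copy t a b B \<and> K2t_edges a b B \<subseteq> G)"

definition ex_Berge_K2t :: "nat \<Rightarrow> nat \<Rightarrow> nat \<Rightarrow> nat" where
  "ex_Berge_K2t r n t = Max {card H | H. uniform_hypergraph r n H \<and> \<not> has_Berge_K2t t H}"

definition ex_K2t :: "nat \<Rightarrow> nat \<Rightarrow> nat" where
  "ex_K2t n t = Max {card G | G. uniform_hypergraph 2 n G \<and> \<not> has_K2t t G}"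

end

theory Submission
  imports Defs
begin

text \<open>Choose a largest family \<open>M \<subseteq> H\<close> together with an injective choice of a pair
  \<open>g h \<subseteq> h\<close> for each \<open>h \<in> M\<close>.\<close>

lemma uniform_hypergraph_finite:
  assumes "uniform_hypergraph r n H"
  shows "finite H"
proof (rule finite_subset)
  show "H \<subseteq> Pow {0..<n}" using assms unfolding uniform_hypergraph_def by auto
qed simp

lemma finite_card_uniform_hypergraphs:
  "finite {card H | H. uniform_hypergraph r n H \<and> P H}"
proof (rule finite_subset)
  show "{card H | H. uniform_hypergraph r n H \<and> P H} \<subseteq> {..card (Pow {0..<n})}"
    unfolding uniform_hypergraph_def by (auto intro!: card_mono)
qed simp

lemma card_le_ex_K2t:
  assumes "uniform_hypergraph 2 n G" and "\<not> has_K2t t G"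
  shows "card G \<le> ex_K2t n t"
  unfolding ex_K2t_def using assms finite_card_uniform_hypergraphs by (intro Max_ge) auto

lemma not_has_Berge_K2t_empty:
  assumes "t \<ge> 1"
  shows "\<not> has_Berge_K2t t {}"
proof
  assume "has_Berge_K2t t {}"
  then obtain a b B where copy: "is_K2t_copy t a b B" and no_edges: "K2t_edges a b B = {}"
    unfolding has_Berge_K2t_def by (elim exE conjE) auto
  have "B \<noteq> {}" using copy assms unfolding is_K2t_copy_def by auto
  then obtain y where "y \<in> B" by blast
  then have "{a, y} \<in> K2t_edges a b B" unfolding K2t_edges_def by blast
  with no_edges show False by blast
qed

lemma ex_Berge_K2t_le:
  assumes "t \<ge> 1"
    and "\<And>H. uniform_hypergraph r n H \<Longrightarrow> \<not> has_Berge_K2t t H \<Longrightarrow> card H \<le> c"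
  shows "ex_Berge_K2t r n t \<le> c"
proof -
  let ?S = "{card H | H. uniform_hypergraph r n H \<and> \<not> has_Berge_K2t t H}"
  have "uniform_hypergraph r n {}" unfolding uniform_hypergraph_def by simp
  with not_has_Berge_K2t_empty[OF assms(1)] have "?S \<noteq> {}" by blast
  moreover have "finite ?S" by (rule finite_card_uniform_hypergraphs)
  moreover have "a \<le> c" if "a \<in> ?S" for a using that assms(2) by blast
  ultimately show ?thesis unfolding ex_Berge_K2t_def by (intro Max.boundedI)
qed

definition distinct_pair_choice :: "'a set set \<Rightarrow> ('a set \<Rightarrow> 'a set) \<Rightarrow> bool" where
  "distinct_pair_choice M g \<longleftrightarrow> inj_on g M \<and> (\<forall>h\<in>M. g h \<subseteq> h \<and> card (g h) = 2)"

lemma obtain_saturated_distinct_pair_choice: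
  assumes "finite H"
  obtains M g where "M \<subseteq> H" and "distinct_pair_choice M g"
    and "\<And>h p. h \<in> H - M \<Longrightarrow> p \<subseteq> h \<Longrightarrow> card p = 2 \<Longrightarrow> p \<in> g ` M"
proof -
  define C where "C = {M. M \<subseteq> H \<and> (\<exists>g. distinct_pair_choice M g)}"
  have "finite C" unfolding C_def using assms by simp
  moreover have "{} \<in> C" unfolding C_def distinct_pair_choice_def by auto
  ultimately have "Max (card ` C) \<in> card ` C" by (intro Max_in) auto
  then obtain M where "M \<in> C" and "card M = Max (card ` C)" by auto
  with \<open>finite C\<close> have M_max: "\<And>M'. M' \<in> C \<Longrightarrow> card M' \<le> card M" by simp
  from \<open>M \<in> C\<close> obtain g where MH: "M \<subseteq> H" and choice: "distinct_pair_choice M g"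
    unfolding C_def by auto
  have "p \<in> g ` M" if h: "h \<in> H - M" and p: "p \<subseteq> h" "card p = 2" for h p
  proof (rule ccontr)
    assume "p \<notin> g ` M"
    then have "inj_on (g(h := p)) (insert h M)"
      using choice h unfolding distinct_pair_choice_def by (auto simp: inj_on_fun_updI)
    with choice h p have "distinct_pair_choice (insert h M) (g(h := p))"
      unfolding distinct_pair_choice_def by simp
    with h MH have "insert h M \<in> C" unfolding C_def by blast
    then have "card (insert h M) \<le> card M" by (rule M_max)
    with h MH assms show False by (simp add: finite_subset)
  qed
  with MH choice that show ?thesis by blast
qed

lemma has_Berge_K2t_if_has_K2t_choice_image:
  assumes "M \<subseteq> H" and "distinct_pair_choice M g" and "has_K2t t (g ` M)"
  shows "has_Berge_K2t t H"
proof -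
  obtain a b B where copy: "is_K2t_copy t a b B" and sub: "K2t_edges a b B \<subseteq> g ` M"
    using assms(3) unfolding has_K2t_def by auto
  have inj: "inj_on g M" and sub_edge: "\<And>h. h \<in> M \<Longrightarrow> g h \<subseteq> h"
    using assms(2) unfolding distinct_pair_choice_def by auto
  let ?f = "inv_into M g"
  have "inj_on ?f (K2t_edges a b B)"
    using sub by (intro inj_on_inv_into)
  moreover have "?f ` K2t_edges a b B \<subseteq> H"
    using sub assms(1) by (auto intro: inv_into_into)
  moreover have "e \<subseteq> ?f e" if "e \<in> K2t_edges a b B" for e
  proof -
    have "e \<in> g ` M" using sub that by blast
    then show ?thesis using sub_edge[of "?f e"] by (simp add: f_inv_into_f inv_into_into)
  qed
  ultimately show ?thesis
    unfolding has_Berge_K2t_def using copy by blast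
qed

definition common_neighbours :: "'a set set \<Rightarrow> 'a \<Rightarrow> 'a \<Rightarrow> 'a set" where
  "common_neighbours G u v = {w. {u, w} \<in> G \<and> {v, w} \<in> G}"

lemma finite_common_neighbours:
  assumes "uniform_hypergraph 2 n G"
  shows "finite (common_neighbours G u v)"
proof (rule finite_subset)
  show "common_neighbours G u v \<subseteq> {0..<n}"
    using assms unfolding common_neighbours_def uniform_hypergraph_def by auto
qed simp

lemma card_common_neighbours_less:
  assumes G: "uniform_hypergraph 2 n G" and "\<not> has_K2t t G" and "u \<noteq> v"
  shows "card (common_neighbours G u v) < t"
proof (rule ccontr)
  assume "\<not> ?thesis"
  then obtain B where B: "B \<subseteq> common_neighbours G u v" and "card B = t"
    by (meson not_less obtain_subset_with_card_n)
  have "w \<noteq> u \<and> w \<noteq> v" if "w \<in> common_neighbours G u v" for w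
  proof -
    have "card {u, w} = 2" "card {v, w} = 2"
      using that G unfolding common_neighbours_def uniform_hypergraph_def by auto
    then show ?thesis by auto
  qed
  moreover have "finite B" using B finite_common_neighbours[OF G] by (rule finite_subset)
  ultimately have "is_K2t_copy t u v B"
    using B \<open>card B = t\<close> \<open>u \<noteq> v\<close> unfolding is_K2t_copy_def by blast
  moreover have "K2t_edges u v B \<subseteq> G"
    using B unfolding K2t_edges_def common_neighbours_def by auto
  ultimately show False using assms(2) unfolding has_K2t_def by blast
qed

lemma card_edges_through_pair_le:
  assumes E: "uniform_hypergraph r n E" and G: "uniform_hypergraph 2 n G"
    and "\<not> has_K2t t G"
    and shadow: "\<And>h p. h \<in> E \<Longrightarrow> p \<subseteq> h \<Longrightarrow> card p = 2 \<Longrightarrow> p \<in> G"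
    and "p \<in> G"
  shows "card {h \<in> E. p \<subseteq> h} \<le> (t - 1) choose (r - 2)"
proof -
  obtain u v where p: "p = {u, v}" and "u \<noteq> v"
    using \<open>p \<in> G\<close> G unfolding uniform_hypergraph_def by (meson card_2_iff)
  let ?N = "common_neighbours G u v"
  have finN: "finite ?N" using G by (rule finite_common_neighbours)
  have "(\<lambda>h. h - p) ` {h \<in> E. p \<subseteq> h} \<subseteq> {D. D \<subseteq> ?N \<and> card D = r - 2}"
  proof clarify
    fix h assume h: "h \<in> E" "p \<subseteq> h"
    then have "card h = r" "finite h"
      using E unfolding uniform_hypergraph_def by (auto intro: finite_subset)
    moreover have "h - p \<subseteq> ?N"
      using shadow[OF h(1), of "{u, _}"] shadow[OF h(1), of "{v, _}"] h(2)
      unfolding p common_neighbours_def by (auto simp: card_2_iff)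
    ultimately show "h - p \<subseteq> ?N \<and> card (h - p) = r - 2"
      using h(2) \<open>u \<noteq> v\<close> by (simp add: p card_Diff_subset finite_subset)
  qed
  moreover have "inj_on (\<lambda>h. h - p) {h \<in> E. p \<subseteq> h}"
    unfolding inj_on_def by blast
  ultimately have "card {h \<in> E. p \<subseteq> h} \<le> card {D. D \<subseteq> ?N \<and> card D = r - 2}"
    using finN by (intro card_inj_on_le) auto
  also have "\<dots> = card ?N choose (r - 2)" using finN by (rule n_subsets)
  also have "\<dots> \<le> (t - 1) choose (r - 2)"
    using card_common_neighbours_less[OF G \<open>\<not> has_K2t t G\<close> \<open>u \<noteq> v\<close>]
    by (intro binomial_right_mono) simp
  finally show ?thesis .
qed

lemma card_le_if_shadow_in_K2t_free:
  assumes E: "uniform_hypergraph r n E" and G: "uniform_hypergraph 2 n G"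
    and "\<not> has_K2t t G"
    and shadow: "\<And>h p. h \<in> E \<Longrightarrow> p \<subseteq> h \<Longrightarrow> card p = 2 \<Longrightarrow> p \<in> G"
    and "r \<ge> 2"
  shows "card E \<le> card G * ((t - 1) choose (r - 2))"
proof -
  have "E \<subseteq> (\<Union>p\<in>G. {h \<in> E. p \<subseteq> h})"
  proof
    fix h assume "h \<in> E"
    moreover have "card h \<ge> 2" using \<open>h \<in> E\<close> E \<open>r \<ge> 2\<close> unfolding uniform_hypergraph_def by simp
    then obtain p where "p \<subseteq> h" "card p = 2" by (meson obtain_subset_with_card_n)
    ultimately show "h \<in> (\<Union>p\<in>G. {h \<in> E. p \<subseteq> h})" using shadow by blast
  qed
  then have "card E = card (\<Union>p\<in>G. {h \<in> E. p \<subseteq> h})"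
    by (intro arg_cong[where f = card]) blast
  also have "\<dots> \<le> (\<Sum>p\<in>G. card {h \<in> E. p \<subseteq> h})"
    by (rule card_UN_le[OF uniform_hypergraph_finite[OF G]])
  also have "\<dots> \<le> (\<Sum>p\<in>G. (t - 1) choose (r - 2))"
    using card_edges_through_pair_le[OF E G \<open>\<not> has_K2t t G\<close> shadow] by (intro sum_mono)
  finally show ?thesis by simp
qed

lemma card_le_if_not_has_Berge_K2t:
  assumes H: "uniform_hypergraph r n H" and "\<not> has_Berge_K2t t H" and "r \<ge> 2"
  shows "card H \<le> ex_K2t n t * (1 + ((t - 1) choose (r - 2)))"
proof -
  have finH: "finite H" using H by (rule uniform_hypergraph_finite)
  obtain M g where MH: "M \<subseteq> H" and choice: "distinct_pair_choice M g"
    and saturated: "\<And>h p. h \<in> H - M \<Longrightarrow> p \<subseteq> h \<Longrightarrow> card p = 2 \<Longrightarrow> p \<in> g ` M"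
    using obtain_saturated_distinct_pair_choice[OF finH] by blast
  let ?G = "g ` M"
  have G: "uniform_hypergraph 2 n ?G"
    using H MH choice unfolding uniform_hypergraph_def distinct_pair_choice_def by fastforce
  have K2t_free: "\<not> has_K2t t ?G"
    using has_Berge_K2t_if_has_K2t_choice_image[OF MH choice] assms(2) by blast
  have HM: "uniform_hypergraph r n (H - M)"
    using H unfolding uniform_hypergraph_def by blast
  have "card M = card ?G"
    using choice unfolding distinct_pair_choice_def by (simp add: card_image)
  then have "card H = card ?G + card (H - M)"
    using card_Diff_subset[OF finite_subset[OF MH finH] MH] card_mono[OF finH MH] by simp
  also have "\<dots> \<le> card ?G + card ?G * ((t - 1) choose (r - 2))"
    using card_le_if_shadow_in_K2t_free[OF HM G K2t_free saturated \<open>r \<ge> 2\<close>] by simp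
  also have "\<dots> = card ?G * (1 + ((t - 1) choose (r - 2)))"
    by simp
  also have "\<dots> \<le> ex_K2t n t * (1 + ((t - 1) choose (r - 2)))"
    using card_le_ex_K2t[OF G K2t_free] by (rule mult_right_mono) simp
  finally show ?thesis .
qed

theorem theorem1p5:
  fixes r t n :: nat
  assumes "r \<ge> 3" and "t \<ge> r - 1"
  shows "real (ex_Berge_K2t r n t)
    \<le> (real (r - 1) / real t * real (t choose (r - 1)) + 2 * real t + 1) * real (ex_K2t n t)"
proof -
  let ?c = "(t - 1) choose (r - 2)"
  have "t \<ge> 1" using assms by simp
  have bound: "ex_Berge_K2t r n t \<le> ex_K2t n t * (1 + ?c)"
    using card_le_if_not_has_Berge_K2t assms(1) by (intro ex_Berge_K2t_le[OF \<open>t \<ge> 1\<close>]) simp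
  have "(r - 1) * (t choose (r - 1)) = t * ?c"
    using times_binomial_minus1_eq[of "r - 1" t] assms(1) by (simp add: numeral_2_eq_2)
  then have c_eq: "real ?c = real (r - 1) / real t * real (t choose (r - 1))"
    using \<open>t \<ge> 1\<close> by (simp add: field_simps flip: of_nat_mult)
  have "real (ex_Berge_K2t r n t) \<le> real (ex_K2t n t) * (1 + real ?c)"
    using of_nat_mono[OF bound] by (simp add: algebra_simps)
  also have "\<dots> \<le> (real ?c + 2 * real t + 1) * real (ex_K2t n t)"
    by (simp add: algebra_simps)
  finally show ?thesis unfolding c_eq .
qed

end
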